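(* Let $H$ be a real Hilbert space and let $T:H\to H$ be a nonexpansive operator with $Fix(T)=\{x\in H:Tx=x\}\neq\varnothing$. Let $z^{0},z^{-1}\in H$, let $\{e^k\}_{k\ge0}$ be a sequence in $H$, let $\{\alpha_k\}_{k\ge0},\{\lambda_k\}_{k\ge0}$ be nondecreasing real sequences, and define for $k\ge0$ $$\mu^{k}=z^{k}+\alpha_{k}(z^{k}-z^{k-1}),\qquad z^{k+1}=\mu^{k}+\lambda_{k}(T\mu^{k}+e^{k}-\mu^{k}).$$ Assume: (a) there is $\alpha\in[0,1)$ with $0\le\alpha_k\le\alpha$ for all $k$, and $\alpha_0=0$; (b) there are $\lambda,\sigma,\delta>0$ such that $$\delta>\frac{\alpha[\alpha(1+\alpha)+\sigma]}{1-\alpha^2}\quad\text{and}\quad 0<\lambda\le\lambda_k\le\frac{\delta-\alpha[\alpha(1+\alpha)+\alpha\delta+\sigma]}{\delta[1+\alpha(1+\alpha)+\alpha\delta+\sigma]}\ \text{ for all }k;$$ (c) the sequence $\{z^k\}$ is bounded; (d) $\sum_{k=0}^{+\infty}\|e^k\|<+\infty$. Then: (i) $\sum_{k=0}^{\infty}\|z^{k+1}-z^k\|^2<+\infty$, and in particular $\lim_{k\to+\infty}\|z^{k+1}-z^k\|=0$; (ii) for every $z^*\in Fix(T)$, $\lim_{k\to+\infty}\|z^k-z^*\|$ exists; (iii) $\lim_{k\to+\infty}\|T\mu^k-\mu^k\|=0$ and $\{z^k\}$ converges weakly to a fixed point of $T$. *)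

theory Defs
  imports "HOL-Analysis.Analysis"
begin

text \<open>A real Hilbert space is modelled by a type of class real_inner and complete_space.\<close>

definition nonexpansive :: "('a::real_normed_vector \<Rightarrow> 'a) \<Rightarrow> bool" where
  "nonexpansive T \<longleftrightarrow> (\<forall>x y. norm (T x - T y) \<le> norm (x - y))"

definition Fix :: "('a \<Rightarrow> 'a) \<Rightarrow> 'a set" where
  "Fix T = {x. T x = x}"

definition weakly_converges_to :: "(nat \<Rightarrow> 'a::real_inner) \<Rightarrow> 'a \<Rightarrow> bool" where
  "weakly_converges_to x p \<longleftrightarrow> (\<forall>y. (\<lambda>k. inner (x k) y) \<longlonglongrightarrow> inner p y)"

end

theory Submission
  imports Defs
begin

text \<open>
  For a fixed point x of T and gamma = alpha (1 + alpha) + alpha delta, the quantity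
    |z_k - x|^2 - alpha_k |z_(k-1) - x|^2 + gamma |z_k - z_(k-1)|^2
  decreases along the iteration by at least sigma |z_(k+1) - z_k|^2, up to an error of order |e_k|.
  This comes from the Krasnosel'skii-Mann estimate for the relaxed step at the extrapolated point
  mu_k, combined with Young's inequality with weight alpha_k + delta lambda_k; the upper bound on
  lambda_k is exactly what makes the coefficients fit.  Summing gives (i) and convergence of the
  quantity, and since alpha_k increases to a limit below 1 this yields convergence of |z_k - x|.
  Part (iii) follows from the update rule, and weak convergence from Opial's argument, carried out
  with asymptotic centres in place of weak cluster points: the asymptotic centre of every
  subsequence is a fixed point, and minimality of the centre pins down the limit of every
  convergent subsequence of the inner products with a fixed vector.
\<close>

section \<open>Limit superior of bounded real sequences\<close>

text \<open>Real-valued, unlike the library's limsup on ereal; meaningful for sequences bounded on both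
  sides.\<close>
definition real_limsup :: "(nat \<Rightarrow> real) \<Rightarrow> real" where
  "real_limsup f = Inf {b. eventually (\<lambda>j. f j \<le> b) sequentially}"

lemma real_limsup_le:
  assumes "\<And>j. a \<le> f j" and "eventually (\<lambda>j. f j \<le> b) sequentially"
  shows "real_limsup f \<le> b"
proof -
  have "bdd_below {b. eventually (\<lambda>j. f j \<le> b) sequentially}"
  proof (rule bdd_belowI)
    fix x assume "x \<in> {b. eventually (\<lambda>j. f j \<le> b) sequentially}"
    then obtain N where "\<forall>n\<ge>N. f n \<le> x" by (auto simp: eventually_sequentially)
    then show "a \<le> x" using assms(1)[of N] by auto
  qed
  then show ?thesis unfolding real_limsup_def using assms(2) by (intro cInf_lower) auto
qed

lemma eventually_less_real_limsup:
  assumes "\<And>j. f j \<le> B" and "e > 0"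
  shows "eventually (\<lambda>j. f j < real_limsup f + e) sequentially"
proof -
  have nonempty: "{b. eventually (\<lambda>j. f j \<le> b) sequentially} \<noteq> {}"
    using assms(1) by (auto intro!: exI[of _ B])
  have "real_limsup f < real_limsup f + e" using assms(2) by simp
  then obtain b where "eventually (\<lambda>j. f j \<le> b) sequentially" "b < real_limsup f + e"
    using cInf_lessD[OF nonempty] unfolding real_limsup_def by blast
  then show ?thesis by (auto elim: eventually_mono)
qed

lemma real_limsup_ge:
  assumes "\<And>j. a \<le> f j" and "\<And>j. f j \<le> B"
  shows "a \<le> real_limsup f"
proof (rule field_le_epsilon)
  fix e :: real assume "e > 0"
  then have "eventually (\<lambda>j. f j < real_limsup f + e) sequentially"
    using assms(2) by (intro eventually_less_real_limsup)
  then obtain N where "\<forall>n\<ge>N. f n < real_limsup f + e"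
    by (auto simp: eventually_sequentially)
  then show "a \<le> real_limsup f + e" using assms(1)[of N] by force
qed

lemma real_limsup_le_linear_combination:
  fixes f g h v :: "nat \<Rightarrow> real"
  assumes "\<And>j. a \<le> f j" and "\<And>j. g j \<le> Bg" and "\<And>j. h j \<le> Bh"
    and "0 \<le> c" and "0 \<le> d" and "v \<longlonglongrightarrow> 0"
    and le: "\<And>j. f j \<le> c * g j + d * h j + C + v j"
  shows "real_limsup f \<le> c * real_limsup g + d * real_limsup h + C"
proof (rule field_le_epsilon)
  fix e :: real assume "e > 0"
  define e' where "e' = e / (c + d + 1)"
  have "e' > 0" and e_eq: "(c + d + 1) * e' = e"
    using \<open>e > 0\<close> \<open>0 \<le> c\<close> \<open>0 \<le> d\<close> by (simp_all add: e'_def)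
  have "eventually (\<lambda>j. v j < e') sequentially"
    using \<open>v \<longlonglongrightarrow> 0\<close> \<open>e' > 0\<close> by (auto dest: order_tendstoD)
  moreover have "eventually (\<lambda>j. g j < real_limsup g + e') sequentially"
    and "eventually (\<lambda>j. h j < real_limsup h + e') sequentially"
    using eventually_less_real_limsup assms(2,3) \<open>e' > 0\<close> by blast+
  ultimately have
    "eventually (\<lambda>j. f j \<le> c * real_limsup g + d * real_limsup h + C + e) sequentially"
  proof eventually_elim
    case (elim j)
    have "c * g j \<le> c * (real_limsup g + e')" and "d * h j \<le> d * (real_limsup h + e')"
      using elim \<open>0 \<le> c\<close> \<open>0 \<le> d\<close> by (simp_all add: mult_left_mono)
    moreover have "c * (real_limsup g + e') + d * (real_limsup h + e') + C + e'
        = c * real_limsup g + d * real_limsup h + C + e"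
      using e_eq by (simp add: algebra_simps)
    ultimately show ?case using le[of j] elim by linarith
  qed
  then show "real_limsup f \<le> c * real_limsup g + d * real_limsup h + C + e"
    by (rule real_limsup_le[OF assms(1)])
qed

lemma real_limsup_eq_lim:
  assumes "f \<longlonglongrightarrow> L"
  shows "real_limsup f = L"
proof -
  obtain K where K: "\<And>j. \<bar>f j\<bar> \<le> K"
    using convergent_imp_bounded[OF assms] by (auto simp: bounded_iff)
  have lower: "- K \<le> f j" and upper: "f j \<le> K" for j
    using K[of j] by arith+
  have "real_limsup f \<le> L"
  proof (rule field_le_epsilon)
    fix e :: real assume "e > 0"
    then have "eventually (\<lambda>j. f j < L + e) sequentially"
      using order_tendstoD(2)[OF assms, of "L + e"] by simp
    then show "real_limsup f \<le> L + e"
      by (intro real_limsup_le[OF lower]) (auto elim: eventually_mono)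
  qed
  moreover have "L \<le> real_limsup f"
  proof (rule field_le_epsilon)
    fix e :: real assume "e > 0"
    then have "eventually (\<lambda>j. f j < real_limsup f + e) sequentially"
      using upper by (intro eventually_less_real_limsup)
    then have "eventually (\<lambda>j. f j \<le> real_limsup f + e) sequentially"
      by (auto elim: eventually_mono)
    then show "L \<le> real_limsup f + e"
      by (rule tendsto_upperbound[OF assms _ trivial_limit_sequentially])
  qed
  ultimately show ?thesis by simp
qed

lemma power2_le_power2_add_of_le_add:
  fixes x y r :: real
  assumes "0 \<le> x" and "0 \<le> r" and "x \<le> y + r"
  shows "x\<^sup>2 \<le> y\<^sup>2 + 2 * r * x"
proof (cases "r \<le> x")
  case True
  then have "(x - r)\<^sup>2 \<le> y\<^sup>2" using assms by (intro power_mono) auto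
  moreover have "x\<^sup>2 - 2 * r * x \<le> (x - r)\<^sup>2" by (simp add: power2_diff)
  ultimately show ?thesis by linarith
next
  case False
  then have "x * x \<le> (2 * r) * x" using assms by (intro mult_right_mono) auto
  then show ?thesis using zero_le_square[of y] unfolding power2_eq_square by linarith
qed

section \<open>Asymptotic centres and Opial's lemma\<close>

definition asym_radius_sq :: "(nat \<Rightarrow> 'a::real_normed_vector) \<Rightarrow> 'a \<Rightarrow> real" where
  "asym_radius_sq s x = real_limsup (\<lambda>j. (norm (s j - x))\<^sup>2)"

lemma norm_diff_le_of_bound:
  fixes s :: "nat \<Rightarrow> 'a::real_normed_vector"
  assumes "\<And>j. norm (s j) \<le> B"
  shows "norm (s j - x) \<le> B + norm x"
  using norm_triangle_ineq4[of "s j" x] assms[of j] by linarith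

lemma power2_norm_diff_le_of_bound:
  fixes s :: "nat \<Rightarrow> 'a::real_normed_vector"
  assumes "\<And>j. norm (s j) \<le> B"
  shows "(norm (s j - x))\<^sup>2 \<le> (B + norm x)\<^sup>2"
  using norm_diff_le_of_bound[of s B, OF assms] by (intro power_mono) auto

lemma asym_radius_sq_nonneg:
  assumes "\<And>j. norm (s j) \<le> B"
  shows "0 \<le> asym_radius_sq s x"
  unfolding asym_radius_sq_def
  by (rule real_limsup_ge[OF _ power2_norm_diff_le_of_bound[of s B, OF assms]]) simp

lemma asym_radius_sq_le:
  fixes s :: "nat \<Rightarrow> 'a::real_normed_vector"
  assumes "\<And>j. norm (s j) \<le> B" and "v \<longlonglongrightarrow> 0"
    and "\<And>j. (norm (s j - x))\<^sup>2 \<le> (norm (s j - y))\<^sup>2 + C + v j"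
  shows "asym_radius_sq s x \<le> asym_radius_sq s y + C"
proof -
  have "asym_radius_sq s x \<le> 1 * asym_radius_sq s y + 0 * asym_radius_sq s y + C"
    unfolding asym_radius_sq_def
    using assms power2_norm_diff_le_of_bound[of s B, OF assms(1)]
    by (intro real_limsup_le_linear_combination[where a=0]) auto
  then show ?thesis by simp
qed

lemma asym_radius_sq_midpoint:
  fixes s :: "nat \<Rightarrow> 'a::real_inner"
  assumes "\<And>j. norm (s j) \<le> B"
  shows "asym_radius_sq s ((1/2) *\<^sub>R (x + y))
    \<le> asym_radius_sq s x / 2 + asym_radius_sq s y / 2 - (norm (x - y))\<^sup>2 / 4"
proof -
  have parallelogram: "(norm (p - (1/2) *\<^sub>R (x + y)))\<^sup>2
      = (1/2) * (norm (p - x))\<^sup>2 + (1/2) * (norm (p - y))\<^sup>2 - (norm (x - y))\<^sup>2 / 4" for p :: 'a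
    by (simp add: power2_norm_eq_inner inner_diff_left inner_diff_right inner_add_left
        inner_add_right inner_commute algebra_simps) (simp add: field_simps)
  have le: "(norm (s j - (1/2) *\<^sub>R (x + y)))\<^sup>2
      \<le> (1/2) * (norm (s j - x))\<^sup>2 + (1/2) * (norm (s j - y))\<^sup>2 + (- (norm (x - y))\<^sup>2 / 4) + 0"
    for j
    using parallelogram[of "s j"] by simp
  have "asym_radius_sq s ((1/2) *\<^sub>R (x + y))
      \<le> (1/2) * asym_radius_sq s x + (1/2) * asym_radius_sq s y + (- (norm (x - y))\<^sup>2 / 4)"
    unfolding asym_radius_sq_def
    by (rule real_limsup_le_linear_combination[where a=0, OF _ _ _ _ _ tendsto_const le])
      (auto intro: power2_norm_diff_le_of_bound[of s B, OF assms])
  then show ?thesis by simp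
qed

lemma asym_radius_sq_le_near:
  fixes s :: "nat \<Rightarrow> 'a::real_normed_vector"
  assumes "\<And>j. norm (s j) \<le> B"
  shows "asym_radius_sq s c \<le> asym_radius_sq s x + 2 * norm (c - x) * (B + norm c)"
proof (rule asym_radius_sq_le[OF assms tendsto_const])
  fix j
  have "norm (s j - c) \<le> norm (s j - x) + norm (c - x)"
    using norm_triangle_ineq[of "s j - x" "x - c"] by (simp add: norm_minus_commute)
  then have "(norm (s j - c))\<^sup>2 \<le> (norm (s j - x))\<^sup>2 + 2 * norm (c - x) * norm (s j - c)"
    by (intro power2_le_power2_add_of_le_add) auto
  also have "\<dots> \<le> (norm (s j - x))\<^sup>2 + 2 * norm (c - x) * (B + norm c)"
    using norm_diff_le_of_bound[of s B, OF assms] by (intro add_left_mono mult_left_mono) auto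
  finally show "(norm (s j - c))\<^sup>2 \<le> (norm (s j - x))\<^sup>2 + 2 * norm (c - x) * (B + norm c) + 0"
    by simp
qed

lemma asym_radius_sq_minimizing_Cauchy:
  fixes s :: "nat \<Rightarrow> 'a::real_inner"
  assumes "\<And>j. norm (s j) \<le> B" and min: "\<And>x. m \<le> asym_radius_sq s x"
    and lim: "(\<lambda>n. asym_radius_sq s (xs n)) \<longlonglongrightarrow> m"
  shows "Cauchy xs"
proof (rule metric_CauchyI)
  fix e :: real assume "e > 0"
  have dist_sq: "(norm (xs n - xs k))\<^sup>2
      \<le> 2 * (asym_radius_sq s (xs n) - m) + 2 * (asym_radius_sq s (xs k) - m)" for n k
    using min[of "(1/2) *\<^sub>R (xs n + xs k)"]
      asym_radius_sq_midpoint[of s B, OF assms(1), of "xs n" "xs k"]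
    by (simp add: field_simps)
  have "eventually (\<lambda>n. asym_radius_sq s (xs n) < m + e\<^sup>2 / 4) sequentially"
    using order_tendstoD(2)[OF lim] \<open>e > 0\<close> by simp
  then obtain M where M: "\<And>n. n \<ge> M \<Longrightarrow> asym_radius_sq s (xs n) < m + e\<^sup>2 / 4"
    by (auto simp: eventually_sequentially)
  have sq_less: "(norm (xs n - xs k))\<^sup>2 < e\<^sup>2" if "n \<ge> M" "k \<ge> M" for n k
  proof -
    have "(norm (xs n - xs k))\<^sup>2
        \<le> 2 * (asym_radius_sq s (xs n) - m) + 2 * (asym_radius_sq s (xs k) - m)"
      by (rule dist_sq)
    also have "\<dots> < 2 * (e\<^sup>2 / 4) + 2 * (e\<^sup>2 / 4)"
      using M[OF that(1)] M[OF that(2)] by (intro add_strict_mono mult_strict_left_mono) auto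
    finally show ?thesis by simp
  qed
  have "dist (xs n) (xs k) < e" if "n \<ge> M" "k \<ge> M" for n k
    using power_less_imp_less_base[OF sq_less[OF that]] \<open>e > 0\<close> by (simp add: dist_norm)
  then show "\<exists>M. \<forall>n\<ge>M. \<forall>k\<ge>M. dist (xs n) (xs k) < e" by blast
qed

lemma asymptotic_center_exists:
  fixes s :: "nat \<Rightarrow> 'a::{real_inner, complete_space}"
  assumes bound: "\<And>j. norm (s j) \<le> B"
  obtains c where "\<And>x. asym_radius_sq s c \<le> asym_radius_sq s x"
proof -
  define m where "m = Inf (range (asym_radius_sq s))"
  have "bdd_below (range (asym_radius_sq s))"
    using asym_radius_sq_nonneg[of s, OF bound] by (intro bdd_belowI[where m=0]) auto
  then have min: "m \<le> asym_radius_sq s x" for x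
    unfolding m_def by (auto intro: cInf_lower)
  have "\<exists>x. asym_radius_sq s x < m + inverse (real (Suc n))" for n
  proof -
    have "m < m + inverse (real (Suc n))" by simp
    then show ?thesis using cInf_lessD[of "range (asym_radius_sq s)"] unfolding m_def by auto
  qed
  then obtain xs where xs: "\<And>n. asym_radius_sq s (xs n) < m + inverse (real (Suc n))"
    by metis
  have upper_lim: "(\<lambda>n. m + inverse (real (Suc n))) \<longlonglongrightarrow> m"
    using tendsto_add[OF tendsto_const LIMSEQ_inverse_real_of_nat, of m] by simp
  have lower: "eventually (\<lambda>n. m \<le> asym_radius_sq s (xs n)) sequentially"
    using min by simp
  have upper: "eventually (\<lambda>n. asym_radius_sq s (xs n) \<le> m + inverse (real (Suc n))) sequentially"
    using xs by (simp add: less_imp_le)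
  have lim_m: "(\<lambda>n. asym_radius_sq s (xs n)) \<longlonglongrightarrow> m"
    by (rule tendsto_sandwich[OF lower upper tendsto_const upper_lim])
  then have "Cauchy xs" using min by (intro asym_radius_sq_minimizing_Cauchy[of s B, OF bound])
  then obtain c where xs_lim: "xs \<longlonglongrightarrow> c" using Cauchy_convergent_iff convergent_def by blast
  then have "(\<lambda>n. norm (c - xs n)) \<longlonglongrightarrow> 0"
    using tendsto_norm[OF tendsto_diff[OF tendsto_const[of c] xs_lim]] by simp
  then have "(\<lambda>n. asym_radius_sq s (xs n) + 2 * norm (c - xs n) * (B + norm c))
      \<longlonglongrightarrow> m + 2 * 0 * (B + norm c)"
    by (intro tendsto_intros lim_m)
  then have "asym_radius_sq s c \<le> m"
    using asym_radius_sq_le_near[of s B, OF bound] by (intro LIMSEQ_le_const) auto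
  then have "asym_radius_sq s c \<le> asym_radius_sq s x" for x
    using min[of x] by simp
  then show ?thesis by (rule that)
qed

lemma asymptotic_center_fixed:
  fixes T :: "'a::real_inner \<Rightarrow> 'a"
  assumes "nonexpansive T" and bound: "\<And>j. norm (s j) \<le> B"
    and regular: "(\<lambda>j. norm (s j - T (s j))) \<longlonglongrightarrow> 0"
    and center: "\<And>x. asym_radius_sq s c \<le> asym_radius_sq s x"
  shows "T c = c"
proof -
  have v: "(\<lambda>j. 2 * norm (s j - T (s j)) * (B + norm (T c))) \<longlonglongrightarrow> 2 * 0 * (B + norm (T c))"
    by (intro tendsto_intros regular)
  have "asym_radius_sq s (T c) \<le> asym_radius_sq s c + 0"
  proof (rule asym_radius_sq_le[of s B, OF bound v[simplified]])
    fix j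
    have "norm (T (s j) - T c) \<le> norm (s j - c)"
      using \<open>nonexpansive T\<close> unfolding nonexpansive_def by blast
    then have "norm (s j - T c) \<le> norm (s j - c) + norm (s j - T (s j))"
      using norm_triangle_ineq[of "s j - T (s j)" "T (s j) - T c"] by simp
    then have "(norm (s j - T c))\<^sup>2
        \<le> (norm (s j - c))\<^sup>2 + 2 * norm (s j - T (s j)) * norm (s j - T c)"
      by (intro power2_le_power2_add_of_le_add) auto
    also have "\<dots> \<le> (norm (s j - c))\<^sup>2 + 2 * norm (s j - T (s j)) * (B + norm (T c))"
      using norm_diff_le_of_bound[of s B, OF bound] by (intro add_left_mono mult_left_mono) auto
    finally show "(norm (s j - T c))\<^sup>2
        \<le> (norm (s j - c))\<^sup>2 + 0 + 2 * norm (s j - T (s j)) * (B + norm (T c))"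
      by simp
  qed
  moreover have "asym_radius_sq s c \<le> asym_radius_sq s ((1/2) *\<^sub>R (c + T c))"
    by (rule center)
  moreover have "asym_radius_sq s ((1/2) *\<^sub>R (c + T c))
      \<le> asym_radius_sq s c / 2 + asym_radius_sq s (T c) / 2 - (norm (c - T c))\<^sup>2 / 4"
    by (rule asym_radius_sq_midpoint[of s B, OF bound])
  ultimately have "(norm (c - T c))\<^sup>2 \<le> 0" by linarith
  then show ?thesis by simp
qed

lemma asym_radius_sq_eq_lim:
  assumes "(\<lambda>j. norm (s j - x)) \<longlonglongrightarrow> L"
  shows "asym_radius_sq s x = L\<^sup>2"
  unfolding asym_radius_sq_def by (intro real_limsup_eq_lim tendsto_intros assms)

lemma asymptotic_center_inner_limit:
  fixes u :: "nat \<Rightarrow> 'a::real_inner"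
  assumes center: "\<And>x. asym_radius_sq u c \<le> asym_radius_sq u x"
    and dist_lim: "(\<lambda>j. norm (u j - c)) \<longlonglongrightarrow> L"
    and inner_lim: "(\<lambda>j. u j \<bullet> y) \<longlonglongrightarrow> \<beta>"
  shows "\<beta> = c \<bullet> y"
proof -
  define b Y where "b = \<beta> - c \<bullet> y" and "Y = (norm y)\<^sup>2"
  have shifted: "asym_radius_sq u (c + t *\<^sub>R y) = L\<^sup>2 - 2 * t * b + t\<^sup>2 * Y" for t
  proof -
    have "(norm (u j - (c + t *\<^sub>R y)))\<^sup>2 = (norm (u j - c))\<^sup>2 - 2 * t * (u j \<bullet> y - c \<bullet> y) + t\<^sup>2 * Y"
      for j
      unfolding Y_def power2_norm_eq_inner
      by (simp add: inner_diff_left inner_diff_right inner_add_left inner_add_right inner_commute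
          algebra_simps power2_eq_square)
    moreover have "(\<lambda>j. (norm (u j - c))\<^sup>2 - 2 * t * (u j \<bullet> y - c \<bullet> y) + t\<^sup>2 * Y)
        \<longlonglongrightarrow> L\<^sup>2 - 2 * t * b + t\<^sup>2 * Y"
      unfolding b_def by (intro tendsto_intros dist_lim inner_lim)
    ultimately show ?thesis
      unfolding asym_radius_sq_def by (simp add: real_limsup_eq_lim)
  qed
  have "0 \<le> Y" unfolding Y_def by simp
  have quadratic_nonneg: "0 \<le> t\<^sup>2 * Y - 2 * t * b" for t
    using center[of "c + t *\<^sub>R y"] shifted[of t] shifted[of 0] by simp
  \<comment> \<open>Minimising the quadratic would take t = b / Y; dividing by Y + 1 avoids the case Y = 0.\<close>
  define t where "t = b / (Y + 1)"
  have t: "(Y + 1) * t = b" unfolding t_def using \<open>0 \<le> Y\<close> by simp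
  from quadratic_nonneg[of t]
  have "0 \<le> (Y + 1)\<^sup>2 * (t\<^sup>2 * Y - 2 * t * b)" by simp
  also have "\<dots> = ((Y + 1) * t)\<^sup>2 * Y - 2 * ((Y + 1) * t) * b * (Y + 1)"
    by (simp add: power2_eq_square algebra_simps)
  also have "\<dots> = - (b\<^sup>2 * (Y + 2))"
    unfolding t by (simp add: power2_eq_square algebra_simps)
  finally have "b\<^sup>2 \<le> 0"
    using \<open>0 \<le> Y\<close> by (simp add: mult_le_0_iff)
  then show ?thesis unfolding b_def by simp
qed

lemma tendsto_if_subseq_limits_eq:
  fixes f :: "nat \<Rightarrow> 'a::heine_borel"
  assumes "bounded (range f)"
    and subseq_lim: "\<And>r l. strict_mono r \<Longrightarrow> (f \<circ> r) \<longlonglongrightarrow> l \<Longrightarrow> l = a"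
  shows "f \<longlonglongrightarrow> a"
proof (rule ccontr)
  assume "\<not> f \<longlonglongrightarrow> a"
  then obtain e where "e > 0" and not_ev: "\<not> eventually (\<lambda>n. dist (f n) a < e) sequentially"
    unfolding tendsto_iff by blast
  obtain r :: "nat \<Rightarrow> nat" where r: "strict_mono r" and "\<forall>n. \<not> dist (f (r n)) a < e"
    using not_eventually_sequentiallyD[OF not_ev] by blast
  then have far: "e \<le> dist (f (r n)) a" for n by (simp add: not_less)
  have "bounded (range (f \<circ> r))"
    using \<open>bounded (range f)\<close> by (rule bounded_subset) auto
  then obtain l r' where r': "strict_mono r'" and lim: "(f \<circ> r \<circ> r') \<longlonglongrightarrow> l"
    using bounded_imp_convergent_subsequence by blast
  have "l = a"
    using subseq_lim[of "r \<circ> r'"] strict_mono_o[OF r r'] lim by (simp add: o_assoc)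
  moreover have "e \<le> dist l a"
    using far by (intro LIMSEQ_le_const[OF tendsto_dist[OF lim tendsto_const]]) auto
  ultimately show False using \<open>e > 0\<close> by simp
qed

lemma opial_weak_convergence:
  fixes T :: "'a::{real_inner, complete_space} \<Rightarrow> 'a"
  assumes "nonexpansive T" and "bounded (range s)"
    and regular: "(\<lambda>j. norm (s j - T (s j))) \<longlonglongrightarrow> 0"
    and dist_conv: "\<And>x. x \<in> Fix T \<Longrightarrow> convergent (\<lambda>j. norm (s j - x))"
  shows "\<exists>p\<in>Fix T. weakly_converges_to s p"
proof -
  \<comment> \<open>For fixed points the asymptotic radius is the same along every subsequence, so the centre
    of s also minimises the radius of each subsequence.\<close>
  obtain B where bound: "\<And>j. norm (s j) \<le> B"
    using \<open>bounded (range s)\<close> by (auto simp: bounded_iff)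
  obtain c where center: "\<And>x. asym_radius_sq s c \<le> asym_radius_sq s x"
    using asymptotic_center_exists[of s B, OF bound] by blast
  have "c \<in> Fix T"
    using asymptotic_center_fixed[OF \<open>nonexpansive T\<close> bound regular center] by (simp add: Fix_def)
  have dist_lim: "(\<lambda>j. norm ((s \<circ> r) j - x)) \<longlonglongrightarrow> lim (\<lambda>j. norm (s j - x))"
    if "strict_mono r" "x \<in> Fix T" for r x
    using LIMSEQ_subseq_LIMSEQ[OF convergent_LIMSEQ_iff[THEN iffD1, OF dist_conv] that(1)] that(2)
    by (simp add: o_def)
  have radius_subseq: "asym_radius_sq (s \<circ> r) x = asym_radius_sq s x"
    if "strict_mono r" "x \<in> Fix T" for r x
    using asym_radius_sq_eq_lim[OF dist_lim[OF that]]
      asym_radius_sq_eq_lim[OF dist_lim[OF strict_mono_id that(2)]] by (simp add: o_def)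
  have "(\<lambda>j. s j \<bullet> y) \<longlonglongrightarrow> c \<bullet> y" for y
  proof (rule tendsto_if_subseq_limits_eq)
    have "norm (s j \<bullet> y) \<le> B * norm y" for j
      using Cauchy_Schwarz_ineq2[of "s j" y] bound[of j] by (simp add: mult_right_mono order_trans)
    then show "bounded (range (\<lambda>j. s j \<bullet> y))"
      by (auto simp: bounded_iff)
  next
    fix r \<beta> assume r: "strict_mono r" and "((\<lambda>j. s j \<bullet> y) \<circ> r) \<longlonglongrightarrow> \<beta>"
    then have inner_lim: "(\<lambda>j. (s \<circ> r) j \<bullet> y) \<longlonglongrightarrow> \<beta>" by (simp add: o_def)
    have sub_bound: "norm ((s \<circ> r) j) \<le> B" for j using bound by simp
    have sub_regular: "(\<lambda>j. norm ((s \<circ> r) j - T ((s \<circ> r) j))) \<longlonglongrightarrow> 0"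
      using LIMSEQ_subseq_LIMSEQ[OF regular r] by (simp add: o_def)
    obtain c' where center': "\<And>x. asym_radius_sq (s \<circ> r) c' \<le> asym_radius_sq (s \<circ> r) x"
      using asymptotic_center_exists[of "s \<circ> r" B, OF sub_bound] by blast
    have "c' \<in> Fix T"
      using asymptotic_center_fixed[OF \<open>nonexpansive T\<close> sub_bound sub_regular center']
      by (simp add: Fix_def)
    have "asym_radius_sq (s \<circ> r) c \<le> asym_radius_sq (s \<circ> r) x" for x
    proof -
      have "asym_radius_sq (s \<circ> r) c = asym_radius_sq s c"
        using radius_subseq[OF r \<open>c \<in> Fix T\<close>] .
      also have "\<dots> \<le> asym_radius_sq s c'" by (rule center)
      also have "\<dots> = asym_radius_sq (s \<circ> r) c'"
        using radius_subseq[OF r \<open>c' \<in> Fix T\<close>] by simp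
      also have "\<dots> \<le> asym_radius_sq (s \<circ> r) x" by (rule center')
      finally show ?thesis .
    qed
    then show "\<beta> = c \<bullet> y"
      using asymptotic_center_inner_limit dist_lim[OF r \<open>c \<in> Fix T\<close>] inner_lim by blast
  qed
  then show ?thesis using \<open>c \<in> Fix T\<close> unfolding weakly_converges_to_def by blast
qed

section \<open>One step of the inertial Krasnosel'skii-Mann iteration\<close>

lemma power2_norm_convex_combination:
  fixes u v :: "'a::real_inner"
  shows "(norm ((1 - l) *\<^sub>R u + l *\<^sub>R v))\<^sup>2
    = (1 - l) * (norm u)\<^sup>2 + l * (norm v)\<^sup>2 - l * (1 - l) * (norm (u - v))\<^sup>2"
  unfolding power2_norm_eq_inner
  by (simp add: inner_diff_left inner_diff_right inner_add_left inner_add_right inner_commute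
      algebra_simps power2_eq_square)

lemma power2_norm_extrapolation:
  fixes u v :: "'a::real_inner"
  shows "(norm ((1 + a) *\<^sub>R u - a *\<^sub>R v))\<^sup>2
    = (1 + a) * (norm u)\<^sup>2 - a * (norm v)\<^sup>2 + a * (1 + a) * (norm (u - v))\<^sup>2"
  unfolding power2_norm_eq_inner
  by (simp add: inner_diff_left inner_diff_right inner_add_left inner_add_right inner_commute
      algebra_simps power2_eq_square)

lemma power2_norm_diff_scaled_ge:
  fixes p q :: "'a::real_inner"
  assumes "0 < w" and "0 \<le> a"
  shows "(1 - a / w) * (norm p)\<^sup>2 + (a\<^sup>2 - a * w) * (norm q)\<^sup>2 \<le> (norm (p - a *\<^sub>R q))\<^sup>2"
proof -
  have expand: "(norm (p - t *\<^sub>R q))\<^sup>2 = (norm p)\<^sup>2 - 2 * t * (p \<bullet> q) + t\<^sup>2 * (norm q)\<^sup>2" for t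
    unfolding power2_norm_eq_inner
    by (simp add: inner_diff_left inner_diff_right inner_commute algebra_simps power2_eq_square)
  have "2 * w * (p \<bullet> q) \<le> (norm p)\<^sup>2 + w\<^sup>2 * (norm q)\<^sup>2"
    using expand[of w] zero_le_power2[of "norm (p - w *\<^sub>R q)"] by linarith
  then have "2 * (p \<bullet> q) \<le> (norm p)\<^sup>2 / w + w * (norm q)\<^sup>2"
    using \<open>0 < w\<close> by (simp add: field_simps power2_eq_square)
  then have "a * (2 * (p \<bullet> q)) \<le> a * ((norm p)\<^sup>2 / w + w * (norm q)\<^sup>2)"
    using \<open>0 \<le> a\<close> by (rule mult_left_mono)
  then show ?thesis unfolding expand by (simp add: algebra_simps)
qed

lemma km_step_fejer:
  fixes T :: "'a::real_inner \<Rightarrow> 'a"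
  assumes "nonexpansive T" and "T x = x" and "0 < l" and "l \<le> 1"
  shows "(norm (m + l *\<^sub>R (T m - m) - x))\<^sup>2
    \<le> (norm (m - x))\<^sup>2 - ((1 - l) / l) * (norm (l *\<^sub>R (T m - m)))\<^sup>2"
proof -
  have "norm (T m - x) \<le> norm (m - x)"
    using assms(1,2) unfolding nonexpansive_def by metis
  then have "(norm (T m - x))\<^sup>2 \<le> (norm (m - x))\<^sup>2" by (intro power_mono) auto
  have "m + l *\<^sub>R (T m - m) - x = (1 - l) *\<^sub>R (m - x) + l *\<^sub>R (T m - x)"
    by (simp add: algebra_simps)
  then have "(norm (m + l *\<^sub>R (T m - m) - x))\<^sup>2
      = (1 - l) * (norm (m - x))\<^sup>2 + l * (norm (T m - x))\<^sup>2 - l * (1 - l) * (norm (T m - m))\<^sup>2"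
    using power2_norm_convex_combination[of l "m - x" "T m - x"] by (simp add: norm_minus_commute)
  also have "\<dots> \<le> (norm (m - x))\<^sup>2 - l * (1 - l) * (norm (T m - m))\<^sup>2"
    using \<open>(norm (T m - x))\<^sup>2 \<le> (norm (m - x))\<^sup>2\<close> \<open>0 < l\<close>
    by (simp add: algebra_simps mult_left_mono)
  also have "l * (1 - l) * (norm (T m - m))\<^sup>2 = ((1 - l) / l) * (l * norm (T m - m))\<^sup>2"
    using \<open>0 < l\<close> by (simp add: power2_eq_square field_simps)
  also have "l * norm (T m - m) = norm (l *\<^sub>R (T m - m))"
    using \<open>0 < l\<close> by simp
  finally show ?thesis .
qed

lemma km_step_with_error:
  fixes T :: "'a::real_inner \<Rightarrow> 'a"
  assumes "nonexpansive T" and "T x = x" and "0 < l" and "l \<le> 1"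
    and z1: "z1 = m + l *\<^sub>R (T m + e - m)"
  shows "(norm (z1 - x))\<^sup>2 \<le> (norm (m - x))\<^sup>2 - ((1 - l) / l) * (norm (z1 - m))\<^sup>2
    + 2 * norm e * (norm (z1 - x) + ((1 - l) / l) * norm (z1 - m))"
proof -
  define zh where "zh = m + l *\<^sub>R (T m - m)"
  have z1_zh: "z1 = zh + l *\<^sub>R e" unfolding z1 zh_def by (simp add: algebra_simps)
  have "norm (l *\<^sub>R e) \<le> norm e" using assms(3,4) by (simp add: mult_left_le_one_le)
  then have close: "norm (z1 - y) \<le> norm (zh - y) + norm e" for y
    using norm_triangle_ineq[of "zh - y" "l *\<^sub>R e"] unfolding z1_zh by (simp add: algebra_simps)
  have "(norm (z1 - x))\<^sup>2 \<le> (norm (zh - x))\<^sup>2 + 2 * norm e * norm (z1 - x)"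
    using close[of x] by (intro power2_le_power2_add_of_le_add) auto
  moreover have "(norm (z1 - m))\<^sup>2 \<le> (norm (zh - m))\<^sup>2 + 2 * norm e * norm (z1 - m)"
    using close[of m] by (intro power2_le_power2_add_of_le_add) auto
  then have "((1 - l) / l) * (norm (z1 - m))\<^sup>2
      \<le> ((1 - l) / l) * ((norm (zh - m))\<^sup>2 + 2 * norm e * norm (z1 - m))"
    using assms(3,4) by (intro mult_left_mono) auto
  moreover have "(norm (zh - x))\<^sup>2 \<le> (norm (m - x))\<^sup>2 - ((1 - l) / l) * (norm (zh - m))\<^sup>2"
    using km_step_fejer[OF assms(1-4)] unfolding zh_def by simp
  ultimately show ?thesis by (simp add: algebra_simps)
qed

lemma inertial_km_step:
  fixes T :: "'a::real_inner \<Rightarrow> 'a"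
  assumes "nonexpansive T" and "T x = x"
    and m: "m = z0 + a *\<^sub>R (z0 - zm)" and z1: "z1 = m + l *\<^sub>R (T m + e - m)"
    and "0 \<le> a" and "0 < l" and "l \<le> 1" and "0 < \<delta>"
  shows "(norm (z1 - x))\<^sup>2 \<le> (1 + a) * (norm (z0 - x))\<^sup>2 - a * (norm (zm - x))\<^sup>2
      + (a * (1 + a) + a * \<delta> * (1 - l)) * (norm (z0 - zm))\<^sup>2
      - ((1 - l) * \<delta> / (a + \<delta> * l)) * (norm (z1 - z0))\<^sup>2
      + 2 * norm e * (norm (z1 - x) + ((1 - l) / l) * norm (z1 - m))"
proof -
  \<comment> \<open>Young's inequality with weight w bounds the step z1 - m = (z1 - z0) - a (z0 - zm) from below.\<close>
  define w where "w = a + \<delta> * l"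
  have "0 < w" unfolding w_def using assms(5-8) by (simp add: add_nonneg_pos)
  have "(norm (m - x))\<^sup>2 = (1 + a) * (norm (z0 - x))\<^sup>2 - a * (norm (zm - x))\<^sup>2
      + a * (1 + a) * (norm (z0 - zm))\<^sup>2"
    using power2_norm_extrapolation[of a "z0 - x" "zm - x"] unfolding m by (simp add: algebra_simps)
  moreover have "(1 - a / w) * (norm (z1 - z0))\<^sup>2 + (a\<^sup>2 - a * w) * (norm (z0 - zm))\<^sup>2
      \<le> (norm (z1 - m))\<^sup>2"
    using power2_norm_diff_scaled_ge[OF \<open>0 < w\<close> \<open>0 \<le> a\<close>, of "z1 - z0" "z0 - zm"]
    unfolding m by (simp add: algebra_simps)
  then have "((1 - l) / l) * ((1 - a / w) * (norm (z1 - z0))\<^sup>2 + (a\<^sup>2 - a * w) * (norm (z0 - zm))\<^sup>2)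
      \<le> ((1 - l) / l) * (norm (z1 - m))\<^sup>2"
    using assms(6,7) by (intro mult_left_mono) auto
  moreover have "((1 - l) / l) * ((1 - a / w) * (norm (z1 - z0))\<^sup>2 + (a\<^sup>2 - a * w) * (norm (z0 - zm))\<^sup>2)
      = ((1 - l) * \<delta> / w) * (norm (z1 - z0))\<^sup>2 - a * \<delta> * (1 - l) * (norm (z0 - zm))\<^sup>2"
  proof -
    have c1: "1 - a / w = \<delta> * l / w" and c2: "a\<^sup>2 - a * w = - (a * \<delta> * l)"
      using \<open>0 < w\<close> unfolding w_def by (simp_all add: field_simps power2_eq_square)
    show ?thesis unfolding c1 c2 using \<open>0 < l\<close> \<open>0 < w\<close> by (simp add: field_simps)
  qed
  moreover note km_step_with_error[OF assms(1,2,6,7) z1]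
  moreover have "(a * (1 + a) + a * \<delta> * (1 - l)) * (norm (z0 - zm))\<^sup>2
      = a * (1 + a) * (norm (z0 - zm))\<^sup>2 + a * \<delta> * (1 - l) * (norm (z0 - zm))\<^sup>2"
    by (simp add: algebra_simps)
  ultimately show ?thesis unfolding w_def by linarith
qed

section \<open>Convergence of the iteration\<close>

lemma descent_summable_convergent:
  fixes M c \<epsilon> :: "nat \<Rightarrow> real"
  assumes descent: "\<And>k. M (Suc k) \<le> M k - c k + \<epsilon> k"
    and "\<And>k. 0 \<le> c k" and "\<And>k. 0 \<le> \<epsilon> k" and "summable \<epsilon>"
    and lower: "\<And>k. m \<le> M k"
  shows "summable c" and "convergent M"
proof -
  have partial: "(\<Sum>k<n. c k) \<le> M 0 - M n + (\<Sum>k<n. \<epsilon> k)" for n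
  proof (induction n)
    case (Suc n)
    then show ?case using descent[of n] by simp
  qed simp
  have eps_le: "(\<Sum>k<n. \<epsilon> k) \<le> suminf \<epsilon>" for n
    using sum_le_suminf[OF \<open>summable \<epsilon>\<close> finite_lessThan] \<open>\<And>k. 0 \<le> \<epsilon> k\<close> by blast
  show "summable c"
  proof (rule summableI_nonneg_bounded)
    show "(\<Sum>k<n. c k) \<le> M 0 - m + suminf \<epsilon>" for n
      using partial[of n] eps_le[of n] lower[of n] by linarith
  qed (fact \<open>\<And>k. 0 \<le> c k\<close>)
  define N where "N n = M n - (\<Sum>k<n. \<epsilon> k)" for n
  have "N (Suc n) \<le> N n" for n
    unfolding N_def using descent[of n] \<open>0 \<le> c n\<close> by simp
  then have "decseq N" by (simp add: decseq_Suc_iff)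
  moreover have "m - suminf \<epsilon> \<le> N n" for n
    unfolding N_def using lower[of n] eps_le[of n] by linarith
  ultimately obtain L where "N \<longlonglongrightarrow> L" using decseq_convergent by blast
  then have "(\<lambda>n. N n + (\<Sum>k<n. \<epsilon> k)) \<longlonglongrightarrow> L + suminf \<epsilon>"
    using \<open>summable \<epsilon>\<close> by (intro tendsto_add summable_LIMSEQ)
  then show "convergent M" unfolding N_def convergent_def by auto
qed

lemma tendsto_of_inertial_recursion:
  fixes \<phi> a :: "nat \<Rightarrow> real"
  assumes "\<And>k. \<bar>\<phi> k\<bar> \<le> K" and "a \<longlonglongrightarrow> a_lim" and "a_lim \<noteq> 1"
    and "(\<lambda>k. \<phi> (Suc k) - \<phi> k) \<longlonglongrightarrow> 0"
    and "(\<lambda>k. \<phi> (Suc k) - a (Suc k) * \<phi> k) \<longlonglongrightarrow> L"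
  shows "\<phi> \<longlonglongrightarrow> L / (1 - a_lim)"
proof -
  have "(\<lambda>k. \<bar>a (Suc k) - a_lim\<bar> * K) \<longlonglongrightarrow> \<bar>a_lim - a_lim\<bar> * K"
    using LIMSEQ_Suc[OF \<open>a \<longlonglongrightarrow> a_lim\<close>] by (intro tendsto_intros)
  then have null: "(\<lambda>k. \<bar>a (Suc k) - a_lim\<bar> * K) \<longlonglongrightarrow> 0" by simp
  have dominated:
    "eventually (\<lambda>k. norm ((a (Suc k) - a_lim) * \<phi> k) \<le> \<bar>a (Suc k) - a_lim\<bar> * K) sequentially"
    using assms(1) by (intro always_eventually allI) (simp add: abs_mult mult_left_mono)
  have "(\<lambda>k. (a (Suc k) - a_lim) * \<phi> k) \<longlonglongrightarrow> 0"
    by (rule Lim_null_comparison[OF dominated null])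
  then have "(\<lambda>k. (\<phi> (Suc k) - a (Suc k) * \<phi> k) - (\<phi> (Suc k) - \<phi> k) + (a (Suc k) - a_lim) * \<phi> k)
      \<longlonglongrightarrow> L - 0 + 0"
    by (rule tendsto_add[OF tendsto_diff[OF assms(5,4)]])
  then have "(\<lambda>k. (1 - a_lim) * \<phi> k) \<longlonglongrightarrow> L"
    by (simp add: algebra_simps)
  from tendsto_divide[OF this tendsto_const, of "1 - a_lim"] \<open>a_lim \<noteq> 1\<close>
  show ?thesis by simp
qed

locale inertial_km =
  fixes T :: "'a::{real_inner, complete_space} \<Rightarrow> 'a"
    and z :: "nat \<Rightarrow> 'a" and z_minus1 :: 'a and mu e :: "nat \<Rightarrow> 'a"
    and alpha_k lambda_k :: "nat \<Rightarrow> real" and alpha lambda sigma delta :: real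
  assumes T_ne: "nonexpansive T"
    and mu_def: "\<And>k. mu k = z k + alpha_k k *\<^sub>R (z k - (if k = 0 then z_minus1 else z (k - 1)))"
    and z_rec: "\<And>k. z (Suc k) = mu k + lambda_k k *\<^sub>R (T (mu k) + e k - mu k)"
    and alpha_mono: "mono alpha_k"
    and alpha_less_1: "alpha < 1"
    and alpha_k_bounds: "\<And>k. 0 \<le> alpha_k k \<and> alpha_k k \<le> alpha"
    and parameters_pos: "lambda > 0" "sigma > 0" "delta > 0"
    and lambda_k_bounds: "\<And>k. lambda \<le> lambda_k k \<and>
       lambda_k k \<le> (delta - alpha * (alpha * (1 + alpha) + alpha * delta + sigma))
                     / (delta * (1 + alpha * (1 + alpha) + alpha * delta + sigma))"
    and z_bounded: "bounded (range z)"
    and e_summable: "summable (\<lambda>k. norm (e k))"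
begin

definition z_prev :: "nat \<Rightarrow> 'a" where
  "z_prev k = (if k = 0 then z_minus1 else z (k - 1))"

definition gamma :: real where
  "gamma = alpha * (1 + alpha) + alpha * delta"

definition lyapunov :: "'a \<Rightarrow> nat \<Rightarrow> real" where
  "lyapunov x k = (norm (z k - x))\<^sup>2 - alpha_k k * (norm (z_prev k - x))\<^sup>2
    + gamma * (norm (z k - z_prev k))\<^sup>2"

lemma mu_eq: "mu k = z k + alpha_k k *\<^sub>R (z k - z_prev k)"
  using mu_def[of k] unfolding z_prev_def .

lemma z_prev_Suc [simp]: "z_prev (Suc k) = z k"
  by (simp add: z_prev_def)

lemma alpha_k_nonneg: "0 \<le> alpha_k k" and alpha_k_le: "alpha_k k \<le> alpha"
  using alpha_k_bounds[of k] by auto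

lemma lambda_k_pos: "0 < lambda_k k"
  using lambda_k_bounds[of k] parameters_pos(1) by linarith

lemma gamma_nonneg: "0 \<le> gamma"
  unfolding gamma_def using alpha_k_nonneg[of 0] alpha_k_le[of 0] parameters_pos(3) by simp

lemma lambda_k_upper: "lambda_k k * (delta * (1 + gamma + sigma)) \<le> delta - alpha * (gamma + sigma)"
proof -
  have "0 < delta * (1 + gamma + sigma)"
    using gamma_nonneg parameters_pos(2,3) by simp
  moreover have "lambda_k k \<le> (delta - alpha * (gamma + sigma)) / (delta * (1 + gamma + sigma))"
    using lambda_k_bounds[of k] unfolding gamma_def by (simp add: add.assoc)
  ultimately show ?thesis by (simp add: pos_le_divide_eq)
qed

lemma lambda_k_le_1: "lambda_k k \<le> 1"
proof -
  have "0 \<le> alpha" using alpha_k_nonneg[of 0] alpha_k_le[of 0] by linarith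
  moreover have "0 \<le> gamma + sigma" using gamma_nonneg parameters_pos(2) by simp
  ultimately have "0 \<le> alpha * (gamma + sigma)" and "0 \<le> delta * (gamma + sigma)"
    using parameters_pos(3) by simp_all
  then have "delta - alpha * (gamma + sigma) \<le> delta * (1 + gamma + sigma)"
    by (simp add: algebra_simps)
  then have "lambda_k k * (delta * (1 + gamma + sigma)) \<le> 1 * (delta * (1 + gamma + sigma))"
    using lambda_k_upper[of k] by simp
  then show "lambda_k k \<le> 1"
    using gamma_nonneg parameters_pos(2,3) by (simp add: mult_le_cancel_right)
qed

lemma step_coefficients:
  shows "gamma + sigma \<le> (1 - lambda_k k) * delta / (alpha_k k + delta * lambda_k k)"
    and "alpha_k k * (1 + alpha_k k) + alpha_k k * delta * (1 - lambda_k k) \<le> gamma"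
proof -
  let ?a = "alpha_k k" and ?l = "lambda_k k" and ?G = "gamma + sigma"
  have "?G * ?a \<le> alpha * ?G"
    using alpha_k_le[of k] gamma_nonneg parameters_pos(2) by (simp add: mult_left_mono mult.commute)
  then have "?G * (?a + delta * ?l) \<le> alpha * ?G + ?l * delta * ?G"
    by (simp add: algebra_simps)
  also have "\<dots> \<le> (1 - ?l) * delta"
    using lambda_k_upper[of k] by (simp add: algebra_simps)
  finally have "?G * (?a + delta * ?l) \<le> (1 - ?l) * delta" .
  moreover have "0 < ?a + delta * ?l"
    using alpha_k_nonneg[of k] lambda_k_pos[of k] parameters_pos(3) by (simp add: add_nonneg_pos)
  ultimately show "?G \<le> (1 - ?l) * delta / (?a + delta * ?l)"
    by (simp add: pos_le_divide_eq)
  have "?a * (1 + ?a) \<le> alpha * (1 + alpha)"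
    using alpha_k_nonneg[of k] alpha_k_le[of k] by (intro mult_mono) auto
  moreover have "?a * delta * (1 - ?l) \<le> alpha * delta * 1"
    using alpha_k_nonneg[of k] alpha_k_le[of k] lambda_k_pos[of k] lambda_k_le_1[of k]
      parameters_pos(3)
    by (intro mult_mono) auto
  ultimately show "?a * (1 + ?a) + ?a * delta * (1 - ?l) \<le> gamma"
    unfolding gamma_def by simp
qed

lemma iterates_bounded:
  obtains B where "0 \<le> B" and "\<And>k. norm (z k) \<le> B" and "\<And>k. norm (z_prev k) \<le> B"
    and "\<And>k. norm (mu k) \<le> 3 * B"
proof -
  obtain B0 where B0: "\<And>k. norm (z k) \<le> B0" using z_bounded by (auto simp: bounded_iff)
  define B where "B = max B0 (norm z_minus1)"
  have z_le: "norm (z k) \<le> B" for k using B0[of k] by (simp add: B_def le_max_iff_disj)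
  moreover have z_prev_le: "norm (z_prev k) \<le> B" for k
    using z_le[of "k - 1"] by (simp add: z_prev_def B_def)
  moreover have "norm (mu k) \<le> 3 * B" for k
  proof -
    have "norm (z k - z_prev k) \<le> 2 * B"
      using norm_triangle_ineq4[of "z k" "z_prev k"] z_le[of k] z_prev_le[of k] by simp
    then have "alpha_k k * norm (z k - z_prev k) \<le> 1 * (2 * B)"
      using alpha_k_nonneg[of k] alpha_k_le[of k] alpha_less_1 by (intro mult_mono) auto
    then show ?thesis
      unfolding mu_eq using norm_triangle_ineq[of "z k" "alpha_k k *\<^sub>R (z k - z_prev k)"]
        z_le[of k] alpha_k_nonneg[of k] by simp
  qed
  moreover have "0 \<le> B" using z_le[of 0] norm_ge_zero[of "z 0"] by linarith
  ultimately show ?thesis using that by blast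
qed

lemma iterate_step:
  assumes "T x = x"
  shows "(norm (z (Suc k) - x))\<^sup>2 \<le> (1 + alpha_k k) * (norm (z k - x))\<^sup>2
      - alpha_k k * (norm (z_prev k - x))\<^sup>2 + gamma * (norm (z k - z_prev k))\<^sup>2
      - (gamma + sigma) * (norm (z (Suc k) - z k))\<^sup>2
      + 2 * norm (e k) * (norm (z (Suc k) - x)
          + ((1 - lambda_k k) / lambda_k k) * norm (z (Suc k) - mu k))"
proof -
  have "(alpha_k k * (1 + alpha_k k) + alpha_k k * delta * (1 - lambda_k k))
      * (norm (z k - z_prev k))\<^sup>2 \<le> gamma * (norm (z k - z_prev k))\<^sup>2"
    using step_coefficients(2) by (rule mult_right_mono) simp
  moreover have "(gamma + sigma) * (norm (z (Suc k) - z k))\<^sup>2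
      \<le> ((1 - lambda_k k) * delta / (alpha_k k + delta * lambda_k k)) * (norm (z (Suc k) - z k))\<^sup>2"
    using step_coefficients(1) by (rule mult_right_mono) simp
  moreover note inertial_km_step[OF T_ne assms mu_eq[of k] z_rec[of k] alpha_k_nonneg[of k]
      lambda_k_pos[of k] lambda_k_le_1[of k] parameters_pos(3)]
  ultimately show ?thesis by linarith
qed

lemma step_error_bound:
  obtains C where "0 \<le> C"
    and "\<And>k. 2 * norm (e k) * (norm (z (Suc k) - x)
          + ((1 - lambda_k k) / lambda_k k) * norm (z (Suc k) - mu k)) \<le> C * norm (e k)"
proof -
  obtain B where "0 \<le> B" and z_le: "\<And>k. norm (z k) \<le> B" and mu_le: "\<And>k. norm (mu k) \<le> 3 * B"
    using iterates_bounded by metis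
  define C where "C = 2 * (B + norm x + 4 * B / lambda)"
  have factor_le: "norm (z (Suc k) - x) + ((1 - lambda_k k) / lambda_k k) * norm (z (Suc k) - mu k)
      \<le> B + norm x + 4 * B / lambda" for k
  proof -
    have "(1 - lambda_k k) / lambda_k k \<le> 1 / lambda_k k"
      using lambda_k_pos[of k] by (simp add: divide_right_mono)
    also have "\<dots> \<le> 1 / lambda"
      using lambda_k_bounds[of k] parameters_pos(1) by (simp add: frac_le)
    finally have "(1 - lambda_k k) / lambda_k k * norm (z (Suc k) - mu k) \<le> (1 / lambda) * (4 * B)"
      using norm_triangle_ineq4[of "z (Suc k)" "mu k"] z_le[of "Suc k"] mu_le[of k]
        parameters_pos(1) lambda_k_le_1[of k] lambda_k_pos[of k]
      by (intro mult_mono) auto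
    moreover have "norm (z (Suc k) - x) \<le> B + norm x"
      using norm_diff_le_of_bound[of z B, OF z_le] .
    ultimately show ?thesis by simp
  qed
  have "2 * norm (e k) * (norm (z (Suc k) - x)
      + ((1 - lambda_k k) / lambda_k k) * norm (z (Suc k) - mu k)) \<le> C * norm (e k)" for k
  proof -
    have "2 * norm (e k) * (norm (z (Suc k) - x)
        + ((1 - lambda_k k) / lambda_k k) * norm (z (Suc k) - mu k))
        \<le> 2 * norm (e k) * (B + norm x + 4 * B / lambda)"
      using factor_le[of k] by (rule mult_left_mono) simp
    also have "\<dots> = C * norm (e k)" unfolding C_def by (simp add: algebra_simps)
    finally show ?thesis .
  qed
  moreover have "0 \<le> C" unfolding C_def using \<open>0 \<le> B\<close> parameters_pos(1) by simp
  ultimately show ?thesis using that by blast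
qed

lemma lyapunov_descent:
  assumes "T x = x"
  obtains C where "0 \<le> C"
    and "\<And>k. lyapunov x (Suc k) \<le> lyapunov x k - sigma * (norm (z (Suc k) - z k))\<^sup>2 + C * norm (e k)"
proof -
  obtain C where "0 \<le> C" and error_le: "\<And>k. 2 * norm (e k) * (norm (z (Suc k) - x)
      + ((1 - lambda_k k) / lambda_k k) * norm (z (Suc k) - mu k)) \<le> C * norm (e k)"
    using step_error_bound by metis
  have "lyapunov x (Suc k) \<le> lyapunov x k - sigma * (norm (z (Suc k) - z k))\<^sup>2 + C * norm (e k)"
    for k
  proof -
    have "alpha_k k * (norm (z k - x))\<^sup>2 \<le> alpha_k (Suc k) * (norm (z k - x))\<^sup>2"
      using alpha_mono by (simp add: monoD mult_right_mono)
    moreover have "(1 + alpha_k k) * (norm (z k - x))\<^sup>2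
        = (norm (z k - x))\<^sup>2 + alpha_k k * (norm (z k - x))\<^sup>2"
      and "(gamma + sigma) * (norm (z (Suc k) - z k))\<^sup>2
        = gamma * (norm (z (Suc k) - z k))\<^sup>2 + sigma * (norm (z (Suc k) - z k))\<^sup>2"
      by (simp_all add: algebra_simps)
    ultimately show ?thesis
      using iterate_step[OF assms, of k] error_le[of k] unfolding lyapunov_def z_prev_Suc by linarith
  qed
  with \<open>0 \<le> C\<close> show ?thesis using that by blast
qed

lemma lyapunov_bounded_below:
  assumes "\<And>k. norm (z_prev k) \<le> B"
  shows "- alpha * (B + norm x)\<^sup>2 \<le> lyapunov x k"
proof -
  have "(norm (z_prev k - x))\<^sup>2 \<le> (B + norm x)\<^sup>2"
    using power2_norm_diff_le_of_bound[of z_prev B, OF assms] .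
  then have "alpha_k k * (norm (z_prev k - x))\<^sup>2 \<le> alpha * (B + norm x)\<^sup>2"
    using alpha_k_nonneg[of k] alpha_k_le[of k] by (intro mult_mono) auto
  moreover have "0 \<le> gamma * (norm (z k - z_prev k))\<^sup>2" using gamma_nonneg by simp
  ultimately show ?thesis unfolding lyapunov_def using zero_le_power2[of "norm (z k - x)"] by linarith
qed

lemma lyapunov_summable_convergent:
  assumes "x \<in> Fix T"
  shows "summable (\<lambda>k. (norm (z (Suc k) - z k))\<^sup>2)" and "convergent (lyapunov x)"
proof -
  obtain B where z_prev_le: "\<And>k. norm (z_prev k) \<le> B" using iterates_bounded by metis
  obtain C where "0 \<le> C"
    and descent: "\<And>k. lyapunov x (Suc k) \<le> lyapunov x k - sigma * (norm (z (Suc k) - z k))\<^sup>2 + C * norm (e k)"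
    using lyapunov_descent assms unfolding Fix_def by blast
  have "summable (\<lambda>k. sigma * (norm (z (Suc k) - z k))\<^sup>2)" and "convergent (lyapunov x)"
    using descent_summable_convergent[of "lyapunov x" "\<lambda>k. sigma * (norm (z (Suc k) - z k))\<^sup>2"
        "\<lambda>k. C * norm (e k)", OF descent _ _ _ lyapunov_bounded_below[OF z_prev_le]]
      parameters_pos(2) \<open>0 \<le> C\<close> summable_mult[OF e_summable, of C]
    by simp_all
  then show "summable (\<lambda>k. (norm (z (Suc k) - z k))\<^sup>2)" and "convergent (lyapunov x)"
    using parameters_pos(2) by simp_all
qed

lemma increments_sq_summable:
  assumes "Fix T \<noteq> {}"
  shows "summable (\<lambda>k. (norm (z (Suc k) - z k))\<^sup>2)"
  using assms lyapunov_summable_convergent(1) by blast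

lemma increments_tendsto_zero:
  assumes "Fix T \<noteq> {}"
  shows "(\<lambda>k. norm (z (Suc k) - z k)) \<longlonglongrightarrow> 0"
  using tendsto_real_sqrt[OF summable_LIMSEQ_zero[OF increments_sq_summable[OF assms]]] by simp

lemma backward_increments_tendsto_zero:
  assumes "Fix T \<noteq> {}"
  shows "(\<lambda>k. norm (z k - z_prev k)) \<longlonglongrightarrow> 0"
proof (rule LIMSEQ_imp_Suc)
  show "(\<lambda>k. norm (z (Suc k) - z_prev (Suc k))) \<longlonglongrightarrow> 0"
    using increments_tendsto_zero[OF assms] by simp
qed

lemma dist_fixed_point_convergent:
  assumes "x \<in> Fix T"
  shows "convergent (\<lambda>k. norm (z k - x))"
proof -
  define \<phi> where "\<phi> k = (norm (z k - x))\<^sup>2" for k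
  obtain B where z_le: "\<And>k. norm (z k) \<le> B" using iterates_bounded by metis
  have \<phi>_bound: "\<bar>\<phi> k\<bar> \<le> (B + norm x)\<^sup>2" for k
    using power2_norm_diff_le_of_bound[of z B, OF z_le] by (simp add: \<phi>_def)
  obtain a_lim where a_lim: "alpha_k \<longlonglongrightarrow> a_lim"
    using incseq_convergent[OF alpha_mono, of alpha] alpha_k_le by blast
  have "a_lim \<le> alpha" using alpha_k_le by (intro LIMSEQ_le_const2[OF a_lim]) auto
  have incr: "(\<lambda>k. norm (z (Suc k) - z k)) \<longlonglongrightarrow> 0"
    using increments_tendsto_zero assms by blast
  have "(\<lambda>k. \<phi> (Suc k) - \<phi> k) \<longlonglongrightarrow> 0"
  proof (rule Lim_null_comparison[OF always_eventually[OF allI]])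
    fix k
    let ?n1 = "norm (z (Suc k) - x)" and ?n0 = "norm (z k - x)"
    have "\<bar>?n1 - ?n0\<bar> \<le> norm (z (Suc k) - z k)"
      using norm_triangle_ineq3[of "z (Suc k) - x" "z k - x"] by simp
    moreover have "?n1 + ?n0 \<le> 2 * (B + norm x)"
      using add_mono[OF norm_diff_le_of_bound[of z B, OF z_le, of "Suc k" x]
          norm_diff_le_of_bound[of z B, OF z_le, of k x]]
      by simp
    moreover have "\<phi> (Suc k) - \<phi> k = (?n1 - ?n0) * (?n1 + ?n0)"
      unfolding \<phi>_def by (simp add: power2_eq_square algebra_simps)
    ultimately show "norm (\<phi> (Suc k) - \<phi> k) \<le> norm (z (Suc k) - z k) * (2 * (B + norm x))"
      by (simp add: abs_mult mult_mono)
  next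
    show "(\<lambda>k. norm (z (Suc k) - z k) * (2 * (B + norm x))) \<longlonglongrightarrow> 0"
      using tendsto_mult_left_zero[OF incr] by simp
  qed
  moreover obtain L where "lyapunov x \<longlonglongrightarrow> L"
    using lyapunov_summable_convergent(2)[OF assms] by (auto simp: convergent_def)
  from LIMSEQ_Suc[OF this]
  have "(\<lambda>k. lyapunov x (Suc k) - gamma * (norm (z (Suc k) - z k))\<^sup>2) \<longlonglongrightarrow> L - gamma * 0\<^sup>2"
    by (intro tendsto_intros incr)
  then have "(\<lambda>k. \<phi> (Suc k) - alpha_k (Suc k) * \<phi> k) \<longlonglongrightarrow> L"
    unfolding lyapunov_def \<phi>_def by simp
  moreover have "a_lim \<noteq> 1" using \<open>a_lim \<le> alpha\<close> alpha_less_1 by simp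
  ultimately have "\<phi> \<longlonglongrightarrow> L / (1 - a_lim)"
    using tendsto_of_inertial_recursion[of \<phi> _ alpha_k, OF \<phi>_bound a_lim] by blast
  from tendsto_real_sqrt[OF this] show ?thesis
    unfolding \<phi>_def convergent_def by auto
qed

lemma residual_tendsto_zero:
  assumes "Fix T \<noteq> {}"
  shows "(\<lambda>k. norm (T (mu k) - mu k)) \<longlonglongrightarrow> 0"
proof (rule Lim_null_comparison[OF always_eventually[OF allI]])
  fix k
  let ?l = "lambda_k k"
  have "(1 / ?l) *\<^sub>R (z (Suc k) - mu k) = T (mu k) + e k - mu k"
    using z_rec[of k] lambda_k_pos[of k] by simp
  then have residual: "T (mu k) - mu k = (1 / ?l) *\<^sub>R (z (Suc k) - mu k) - e k"
    by simp
  have step: "z (Suc k) - mu k = (z (Suc k) - z k) - alpha_k k *\<^sub>R (z k - z_prev k)"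
    unfolding mu_eq by (simp add: algebra_simps)
  have "norm (z (Suc k) - mu k) \<le> norm (z (Suc k) - z k) + alpha_k k * norm (z k - z_prev k)"
    using norm_triangle_ineq4[of "z (Suc k) - z k" "alpha_k k *\<^sub>R (z k - z_prev k)"] alpha_k_nonneg[of k]
    unfolding step by simp
  also have "\<dots> \<le> norm (z (Suc k) - z k) + alpha * norm (z k - z_prev k)"
    using alpha_k_le[of k] by (simp add: mult_right_mono)
  moreover have "1 / ?l \<le> 1 / lambda"
    using lambda_k_bounds[of k] parameters_pos(1) by (simp add: frac_le)
  ultimately have "(1 / ?l) * norm (z (Suc k) - mu k)
      \<le> (1 / lambda) * (norm (z (Suc k) - z k) + alpha * norm (z k - z_prev k))"
    using parameters_pos(1) by (intro mult_mono) simp_all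
  then show "norm (norm (T (mu k) - mu k))
      \<le> (1 / lambda) * (norm (z (Suc k) - z k) + alpha * norm (z k - z_prev k)) + norm (e k)"
    using norm_triangle_ineq4[of "(1 / ?l) *\<^sub>R (z (Suc k) - mu k)" "e k"] lambda_k_pos[of k]
    unfolding residual by simp
next
  have "(\<lambda>k. (1 / lambda) * (norm (z (Suc k) - z k) + alpha * norm (z k - z_prev k)) + norm (e k))
      \<longlonglongrightarrow> (1 / lambda) * (0 + alpha * 0) + 0"
    by (intro tendsto_intros backward_increments_tendsto_zero[OF assms] increments_tendsto_zero[OF assms]
        summable_LIMSEQ_zero[OF e_summable])
  then show "(\<lambda>k. (1 / lambda) * (norm (z (Suc k) - z k) + alpha * norm (z k - z_prev k)) + norm (e k))
      \<longlonglongrightarrow> 0"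
    by simp
qed

lemma asymptotically_regular:
  assumes "Fix T \<noteq> {}"
  shows "(\<lambda>k. norm (z k - T (z k))) \<longlonglongrightarrow> 0"
proof (rule Lim_null_comparison[OF always_eventually[OF allI]])
  fix k
  have "norm (z k - mu k) \<le> alpha * norm (z k - z_prev k)"
    unfolding mu_eq using alpha_k_nonneg[of k] alpha_k_le[of k] by (simp add: mult_right_mono)
  moreover have "norm (T (mu k) - T (z k)) \<le> norm (z k - mu k)"
    using T_ne unfolding nonexpansive_def by (metis norm_minus_commute)
  moreover have "norm (z k - T (z k))
      \<le> norm (z k - mu k) + norm (T (mu k) - mu k) + norm (T (mu k) - T (z k))"
    using norm_triangle_ineq4[of "z k - mu k" "T (mu k) - mu k"]
      norm_triangle_ineq[of "(z k - mu k) - (T (mu k) - mu k)" "T (mu k) - T (z k)"]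
    by (simp add: algebra_simps)
  ultimately show "norm (norm (z k - T (z k)))
      \<le> 2 * (alpha * norm (z k - z_prev k)) + norm (T (mu k) - mu k)"
    by simp
next
  have "(\<lambda>k. 2 * (alpha * norm (z k - z_prev k)) + norm (T (mu k) - mu k))
      \<longlonglongrightarrow> 2 * (alpha * 0) + 0"
    by (intro tendsto_intros backward_increments_tendsto_zero[OF assms]
        residual_tendsto_zero[OF assms])
  then show "(\<lambda>k. 2 * (alpha * norm (z k - z_prev k)) + norm (T (mu k) - mu k)) \<longlonglongrightarrow> 0"
    by simp
qed

lemma weakly_convergent_to_fixed_point:
  assumes "Fix T \<noteq> {}"
  shows "\<exists>p\<in>Fix T. weakly_converges_to z p"
  using T_ne z_bounded asymptotically_regular[OF assms] dist_fixed_point_convergent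
  by (rule opial_weak_convergence)

end

theorem theorem2:
  fixes T :: "'a::{real_inner, complete_space} \<Rightarrow> 'a"
    and z :: "nat \<Rightarrow> 'a" and z_minus1 :: 'a
    and mu e :: "nat \<Rightarrow> 'a"
    and alpha_k lambda_k :: "nat \<Rightarrow> real"
    and alpha lambda sigma delta :: real
  assumes T_ne: "nonexpansive T"
    and Fix_ne: "Fix T \<noteq> {}"
    and mu_def: "\<And>k. mu k = z k + alpha_k k *\<^sub>R (z k - (if k = 0 then z_minus1 else z (k - 1)))"
    and z_rec: "\<And>k. z (Suc k) = mu k + lambda_k k *\<^sub>R (T (mu k) + e k - mu k)"
    and alpha_mono: "mono alpha_k"
    and lambda_mono: "mono lambda_k"
    and a1: "0 \<le> alpha" and a2: "alpha < 1"
    and a3: "\<And>k. 0 \<le> alpha_k k \<and> alpha_k k \<le> alpha"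
    and a4: "alpha_k 0 = 0"
    and b1: "lambda > 0" "sigma > 0" "delta > 0"
    and b2: "delta > alpha * (alpha * (1 + alpha) + sigma) / (1 - alpha\<^sup>2)"
    and b3: "\<And>k. lambda \<le> lambda_k k \<and>
       lambda_k k \<le> (delta - alpha * (alpha * (1 + alpha) + alpha * delta + sigma))
                     / (delta * (1 + alpha * (1 + alpha) + alpha * delta + sigma))"
    and c: "bounded (range z)"
    and d: "summable (\<lambda>k. norm (e k))"
  shows "summable (\<lambda>k. (norm (z (Suc k) - z k))\<^sup>2)
    \<and> (\<lambda>k. norm (z (Suc k) - z k)) \<longlonglongrightarrow> 0
    \<and> (\<forall>zs \<in> Fix T. convergent (\<lambda>k. norm (z k - zs)))
    \<and> (\<lambda>k. norm (T (mu k) - mu k)) \<longlonglongrightarrow> 0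
    \<and> (\<exists>p \<in> Fix T. weakly_converges_to z p)"
proof -
  interpret inertial_km T z z_minus1 mu e alpha_k lambda_k alpha lambda sigma delta
    by unfold_locales (fact T_ne mu_def z_rec alpha_mono a2 a3 b1 b3 c d)+
  show ?thesis
    using increments_sq_summable[OF Fix_ne] increments_tendsto_zero[OF Fix_ne]
      dist_fixed_point_convergent residual_tendsto_zero[OF Fix_ne]
      weakly_convergent_to_fixed_point[OF Fix_ne]
    by blast
qed

end
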